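(* Let $K$ be a field, $S=K[X_1,\ldots,X_n]$, $I\subset S$ a monomial ideal, $R=S/I$, and let $x_i$ denote the image of $X_i$ in $R$. Let $x=x_{i_1}\cdots x_{i_r}$ with $1\le i_1<\cdots<i_r\le n$, and set $F=\{i_1,\ldots,i_r\}$. Then for every $a\in\mathbb{Z}^n$ we have $\dim_K (R_x)_a\le 1$, and the following are equivalent: (i) $(R_x)_a\cong K$; (ii) $F\supset G_a$, and for every $u\in G(I)$ there exists $j\notin F$ such that $\nu_j(u)>a_j\ge 0$.
   Context: $S$ and $R$ carry the $\mathbb{Z}^n$-grading with $\deg X_i=e_i$ (the $i$-th unit vector); $R_x$ denotes the localization of $R$ at the element $x$ (equivalently at $x_{i_1},\ldots,x_{i_r}$), with the induced $\mathbb{Z}^n$-grading, and $(R_x)_a$ is its component of degree $a$. $G(I)$ is the minimal set of monomial generators of $I$. For a monomial $u=X_1^{c_1}\cdots X_n^{c_n}$, $\nu_j(u)=c_j$. For $a=(a_1,\ldots,a_n)\in\mathbb{Z}^n$, $G_a=\{i\mid a_i<0\}$. *)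

theory Defs
  imports Main "HOL-Library.Poly_Mapping"
begin

text \<open>The polynomial ring S = K[X_v | v in 'v] over a field K, with a finite type 'v of
  variables (n = CARD('v)).\<close>

type_synonym ('v, 'k) mpoly = "('v \<Rightarrow>\<^sub>0 nat) \<Rightarrow>\<^sub>0 'k"

definition monom :: "('v \<Rightarrow>\<^sub>0 nat) \<Rightarrow> ('v, 'k::field) mpoly" where
  "monom \<alpha> = Poly_Mapping.single \<alpha> 1"

definition Var :: "'v \<Rightarrow> ('v, 'k::field) mpoly" where
  "Var i = monom (Poly_Mapping.single i 1)"

definition const :: "'k::field \<Rightarrow> ('v, 'k) mpoly" where
  "const c = Poly_Mapping.single 0 c"

definition is_ideal :: "('v, 'k::field) mpoly set \<Rightarrow> bool" where
  "is_ideal J \<longleftrightarrow> 0 \<in> J \<and> (\<forall>f\<in>J. \<forall>g\<in>J. f + g \<in> J) \<and> (\<forall>f\<in>J. \<forall>g. g * f \<in> J)"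

definition ideal_gen :: "('v, 'k::field) mpoly set \<Rightarrow> ('v, 'k) mpoly set" where
  "ideal_gen M = \<Inter>{J. is_ideal J \<and> M \<subseteq> J}"

definition monomial_ideal :: "('v, 'k::field) mpoly set \<Rightarrow> bool" where
  "monomial_ideal I \<longleftrightarrow> is_ideal I \<and> I = ideal_gen {monom \<alpha> | \<alpha>. monom \<alpha> \<in> I}"

text \<open>G(I): the minimal monomial generators, represented by their exponent vectors
  (nu_j(u) is then the j-th entry of the exponent vector). Minimality is w.r.t.
  divisibility of monomials.\<close>

definition min_gens :: "('v, 'k::field) mpoly set \<Rightarrow> ('v \<Rightarrow>\<^sub>0 nat) set" where
  "min_gens I = {\<alpha>. monom \<alpha> \<in> I \<and>
      (\<forall>\<beta>. monom \<beta> \<in> I \<and> (\<forall>j. Poly_Mapping.lookup \<beta> j \<le> Poly_Mapping.lookup \<alpha> j) \<longrightarrow> \<beta> = \<alpha>)}"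

definition nu :: "'v \<Rightarrow> ('v \<Rightarrow>\<^sub>0 nat) \<Rightarrow> nat" where
  "nu j u = Poly_Mapping.lookup u j"

text \<open>The element x = prod_{i in F} X_i of S (its image in R = S/I is x_{i_1}...x_{i_r}).\<close>

definition xF :: "'v set \<Rightarrow> ('v, 'k::field) mpoly" where
  "xF F = (\<Prod>i\<in>F. Var i)"

text \<open>An element f/x^k of R_x, with f in S,
  is the equivalence class of the pair (f,k); (f,k) ~ (g,l) iff the images satisfy
  x^m (x^l f - x^k g) = 0 in R = S/I for some m, i.e. x^m (x^l f - x^k g) in I.\<close>

definition loc_eq :: "('v, 'k::field) mpoly set \<Rightarrow> 'v set \<Rightarrow>
    ('v, 'k) mpoly \<times> nat \<Rightarrow> ('v, 'k) mpoly \<times> nat \<Rightarrow> bool" where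
  "loc_eq I F p q \<longleftrightarrow> (\<exists>m. xF F ^ m * (xF F ^ snd q * fst p - xF F ^ snd p * fst q) \<in> I)"

definition frac :: "('v, 'k::field) mpoly set \<Rightarrow> 'v set \<Rightarrow> ('v, 'k) mpoly \<Rightarrow> nat
    \<Rightarrow> (('v, 'k) mpoly \<times> nat) set" where
  "frac I F f k = {q. loc_eq I F (f, k) q}"

definition loc :: "('v, 'k::field) mpoly set \<Rightarrow> 'v set \<Rightarrow> (('v, 'k) mpoly \<times> nat) set set" where
  "loc I F = {frac I F f k | f k. True}"

definition loc_add :: "('v, 'k::field) mpoly set \<Rightarrow> 'v set \<Rightarrow>
    (('v, 'k) mpoly \<times> nat) set \<Rightarrow> (('v, 'k) mpoly \<times> nat) set \<Rightarrow> (('v, 'k) mpoly \<times> nat) set" where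
  "loc_add I F P Q = (SOME T. \<exists>f k g l. P = frac I F f k \<and> Q = frac I F g l \<and>
      T = frac I F (xF F ^ l * f + xF F ^ k * g) (k + l))"

definition loc_smult :: "('v, 'k::field) mpoly set \<Rightarrow> 'v set \<Rightarrow>
    'k \<Rightarrow> (('v, 'k) mpoly \<times> nat) set \<Rightarrow> (('v, 'k) mpoly \<times> nat) set" where
  "loc_smult I F c P = (SOME T. \<exists>f k. P = frac I F f k \<and> T = frac I F (const c * f) k)"

text \<open>The component (R_x)_a consists of the fractions f/x^k
  with f homogeneous of degree a + k * deg x, where deg x = indicator vector of F.\<close>

definition homogeneous :: "('v, 'k::field) mpoly \<Rightarrow> ('v \<Rightarrow> int) \<Rightarrow> bool" where
  "homogeneous f d \<longleftrightarrow> (\<forall>\<alpha>\<in>Poly_Mapping.keys f. \<forall>i. int (Poly_Mapping.lookup \<alpha> i) = d i)"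

definition loc_comp :: "('v, 'k::field) mpoly set \<Rightarrow> 'v set \<Rightarrow> ('v \<Rightarrow> int)
    \<Rightarrow> (('v, 'k) mpoly \<times> nat) set set" where
  "loc_comp I F a = {frac I F f k | f k.
      homogeneous f (\<lambda>i. a i + int k * (if i \<in> F then 1 else 0))}"

definition G_neg :: "('v \<Rightarrow> int) \<Rightarrow> 'v set" where
  "G_neg a = {i. a i < 0}"

definition dim_le_1 :: "('v, 'k::field) mpoly set \<Rightarrow> 'v set \<Rightarrow> (('v, 'k) mpoly \<times> nat) set set \<Rightarrow> bool" where
  "dim_le_1 I F V \<longleftrightarrow> (\<exists>v\<in>V. \<forall>P\<in>V. \<exists>c. P = loc_smult I F c v)"

definition iso_to_K :: "('v, 'k::field) mpoly set \<Rightarrow> 'v set \<Rightarrow> (('v, 'k) mpoly \<times> nat) set set \<Rightarrow> bool" where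
  "iso_to_K I F V \<longleftrightarrow> (\<exists>\<phi>. bij_betw \<phi> (UNIV :: 'k set) V \<and>
      (\<forall>c d. \<phi> (c + d) = loc_add I F (\<phi> c) (\<phi> d)) \<and>
      (\<forall>c d. \<phi> (c * d) = loc_smult I F c (\<phi> d)))"

end

theory Submission
  imports Defs
begin

text \<open>A fraction of degree \<open>a\<close> in \<open>R\<^sub>x\<close> is \<open>f / x\<^sup>k\<close> with \<open>f\<close> homogeneous of degree
  \<open>\<gamma> = a + k \<cdot> deg x\<close>, hence a scalar multiple of the single monomial \<open>X\<^sup>\<gamma>\<close>; such monomials
  exist, for large \<open>k\<close>, exactly when \<open>G\<^sub>a \<subseteq> F\<close>. Multiplying numerator and denominator by
  powers of \<open>x\<close> shows that \<open>c X\<^sup>\<gamma> / x\<^sup>k\<close> does not depend on \<open>k\<close>, so \<open>(R\<^sub>x)\<^sub>a\<close> is the image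
  of a \<open>K\<close>-linear map \<open>K \<rightarrow> R\<^sub>x\<close> and is either \<open>K\<close> or \<open>0\<close>. It is \<open>0\<close> iff
  \<open>x\<^sup>m X\<^sup>\<gamma> \<in> I\<close> for some \<open>m\<close>, i.e. iff some minimal generator \<open>u\<close> divides \<open>X\<^sup>\<gamma>\<close> in the
  variables outside \<open>F\<close>, i.e. \<open>\<nu>\<^sub>j(u) \<le> a\<^sub>j\<close> for all \<open>j \<notin> F\<close>.\<close>

lemma is_ideal_zero: "is_ideal I \<Longrightarrow> 0 \<in> I"
  by (simp add: is_ideal_def)

lemma is_ideal_add: "is_ideal I \<Longrightarrow> f \<in> I \<Longrightarrow> g \<in> I \<Longrightarrow> f + g \<in> I"
  by (simp add: is_ideal_def)

lemma is_ideal_mult: "is_ideal I \<Longrightarrow> f \<in> I \<Longrightarrow> g * f \<in> I"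
  by (simp add: is_ideal_def)

lemma is_ideal_uminus: "is_ideal I \<Longrightarrow> f \<in> I \<Longrightarrow> - f \<in> I"
  using is_ideal_mult[of I f "- 1"] by simp

lemma monomial_ideal_is_ideal: "monomial_ideal I \<Longrightarrow> is_ideal I"
  by (simp add: monomial_ideal_def)

lemma monom_mult: "monom \<alpha> * (monom \<beta> :: ('v, 'k::field) mpoly) = monom (\<alpha> + \<beta>)"
  by (simp add: monom_def mult_single)

lemma monom_zero: "(monom 0 :: ('v, 'k::field) mpoly) = 1"
  by (simp add: monom_def)

lemma monom_mult_single:
  "(monom \<alpha> :: ('v, 'k::field) mpoly) * Poly_Mapping.single \<beta> c = Poly_Mapping.single (\<alpha> + \<beta>) c"
  by (simp add: monom_def mult_single)

lemma const_mult_single: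
  "(const c :: ('v, 'k::field) mpoly) * Poly_Mapping.single \<beta> d = Poly_Mapping.single \<beta> (c * d)"
  by (simp add: const_def mult_single)

section \<open>Monomial ideals\<close>

lemma monomial_ideal_monom_of_key:
  fixes I :: "('v, 'k::field) mpoly set"
  assumes "monomial_ideal I" "f \<in> I" "\<alpha> \<in> Poly_Mapping.keys f"
  shows "monom \<alpha> \<in> I"
proof -
  define J :: "('v, 'k) mpoly set" where "J = {f. \<forall>\<alpha>\<in>Poly_Mapping.keys f. monom \<alpha> \<in> I}"
  have I: "is_ideal I" using assms(1) by (rule monomial_ideal_is_ideal)
  have "g * f \<in> J" if "f \<in> J" for f g
  proof -
    have "monom (\<beta> + \<gamma>) \<in> I" if "\<beta> \<in> Poly_Mapping.keys g" "\<gamma> \<in> Poly_Mapping.keys f" for \<beta> \<gamma>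
      using is_ideal_mult[OF I, of "monom \<gamma>" "monom \<beta>"] \<open>f \<in> J\<close> that
      by (simp add: J_def monom_mult)
    then show ?thesis using keys_mult[of g f] by (auto simp: J_def)
  qed
  then have "is_ideal J"
    unfolding is_ideal_def J_def using keys_add by fastforce
  moreover have "{monom \<alpha> | \<alpha>. monom \<alpha> \<in> I} \<subseteq> J"
    by (auto simp: J_def monom_def)
  ultimately have "ideal_gen {monom \<alpha> | \<alpha>. monom \<alpha> \<in> I} \<subseteq> J"
    unfolding ideal_gen_def by blast
  then have "I \<subseteq> J" using assms(1) by (simp add: monomial_ideal_def)
  then show ?thesis using assms(2,3) by (auto simp: J_def)
qed

lemma single_in_monomial_ideal_iff:
  assumes "monomial_ideal I" "c \<noteq> 0"
  shows "Poly_Mapping.single \<alpha> c \<in> I \<longleftrightarrow> monom \<alpha> \<in> I"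
proof
  assume "Poly_Mapping.single \<alpha> c \<in> I"
  then show "monom \<alpha> \<in> I" using monomial_ideal_monom_of_key[OF assms(1)] assms(2) by simp
next
  assume "monom \<alpha> \<in> I"
  then have "const c * monom \<alpha> \<in> I"
    using is_ideal_mult monomial_ideal_is_ideal[OF assms(1)] by blast
  then show "Poly_Mapping.single \<alpha> c \<in> I" by (simp add: monom_def const_mult_single)
qed

lemma monom_in_ideal_if_divides:
  assumes "is_ideal I" "monom \<alpha> \<in> I" "\<And>j. Poly_Mapping.lookup \<alpha> j \<le> Poly_Mapping.lookup \<beta> j"
  shows "monom \<beta> \<in> I"
proof -
  have "\<beta> = (\<beta> - \<alpha>) + \<alpha>"
    by (rule poly_mapping_eqI) (simp add: lookup_add lookup_minus assms(3))
  then have "monom \<beta> = monom (\<beta> - \<alpha>) * monom \<alpha>" by (simp add: monom_mult)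
  then show ?thesis using is_ideal_mult[OF assms(1,2), of "monom (\<beta> - \<alpha>)"] by metis
qed

text \<open>Minimise the degree, summed over the support of \<open>\<beta>\<close>, among the monomials of \<open>I\<close>
  dividing \<open>X\<^sup>\<beta>\<close>.\<close>

lemma min_gen_divides:
  fixes I :: "('v, 'k::field) mpoly set"
  assumes "monom \<beta> \<in> I"
  shows "\<exists>u\<in>min_gens I. \<forall>j. Poly_Mapping.lookup u j \<le> Poly_Mapping.lookup \<beta> j"
proof -
  define P where "P \<gamma> \<longleftrightarrow> monom \<gamma> \<in> I \<and> (\<forall>j. Poly_Mapping.lookup \<gamma> j \<le> Poly_Mapping.lookup \<beta> j)"
    for \<gamma>
  define deg :: "('v \<Rightarrow>\<^sub>0 nat) \<Rightarrow> nat" where "deg \<gamma> = (\<Sum>j\<in>Poly_Mapping.keys \<beta>. Poly_Mapping.lookup \<gamma> j)" for \<gamma>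
  obtain u where "P u" and u_least: "\<And>\<gamma>. P \<gamma> \<Longrightarrow> deg u \<le> deg \<gamma>"
    using ex_has_least_nat[of P \<beta> deg] assms by (auto simp: P_def)
  have "\<delta> = u" if "monom \<delta> \<in> I" and \<delta>u: "\<forall>j. Poly_Mapping.lookup \<delta> j \<le> Poly_Mapping.lookup u j"
    for \<delta>
  proof (rule ccontr)
    assume "\<delta> \<noteq> u"
    then obtain j where "Poly_Mapping.lookup \<delta> j \<noteq> Poly_Mapping.lookup u j"
      by (meson poly_mapping_eqI)
    with \<delta>u have "Poly_Mapping.lookup \<delta> j < Poly_Mapping.lookup u j"
      by (simp add: order_less_le)
    moreover from this \<open>P u\<close> have "j \<in> Poly_Mapping.keys \<beta>"
      by (metis P_def in_keys_iff le_zero_eq not_less_zero)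
    ultimately have "deg \<delta> < deg u"
      unfolding deg_def using \<delta>u by (intro sum_strict_mono_ex1) auto
    moreover have "P \<delta>" using that \<open>P u\<close> unfolding P_def by (meson le_trans)
    ultimately show False using u_least by fastforce
  qed
  with \<open>P u\<close> show ?thesis unfolding P_def min_gens_def by blast
qed

section \<open>The localization\<close>

lemma loc_eq_refl: "is_ideal I \<Longrightarrow> loc_eq I F p p"
  unfolding loc_eq_def by (rule exI[of _ 0]) (simp add: is_ideal_zero)

lemma loc_eq_sym:
  assumes "is_ideal I" "loc_eq I F p q"
  shows "loc_eq I F q p"
proof -
  obtain m where "xF F ^ m * (xF F ^ snd q * fst p - xF F ^ snd p * fst q) \<in> I"
    using assms(2) unfolding loc_eq_def by blast
  from is_ideal_uminus[OF assms(1) this] show ?thesis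
    unfolding loc_eq_def by (metis minus_diff_eq right_diff_distrib)
qed

lemma loc_eq_trans:
  fixes I :: "('v, 'k::field) mpoly set"
  assumes "is_ideal I" "loc_eq I F (f, k) (g, l)" "loc_eq I F (g, l) (h, j)"
  shows "loc_eq I F (f, k) (h, j)"
proof -
  define X :: "('v, 'k) mpoly" where "X = xF F"
  obtain m where m: "X ^ m * (X ^ l * f - X ^ k * g) \<in> I"
    using assms(2) unfolding loc_eq_def X_def by auto
  obtain n where n: "X ^ n * (X ^ j * g - X ^ l * h) \<in> I"
    using assms(3) unfolding loc_eq_def X_def by auto
  have "X ^ (m + n + l) * (X ^ j * f - X ^ k * h) =
      X ^ (n + j) * (X ^ m * (X ^ l * f - X ^ k * g)) + X ^ (m + k) * (X ^ n * (X ^ j * g - X ^ l * h))"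
    by (simp add: algebra_simps power_add)
  also have "\<dots> \<in> I"
    using assms(1) m n by (blast intro: is_ideal_add is_ideal_mult)
  finally show ?thesis unfolding loc_eq_def X_def by auto
qed

lemma frac_eq_iff:
  assumes "is_ideal I"
  shows "frac I F f k = frac I F g l \<longleftrightarrow> loc_eq I F (f, k) (g, l)"
  using loc_eq_refl[OF assms] loc_eq_sym[OF assms] loc_eq_trans[OF assms]
  unfolding frac_def set_eq_iff by (metis mem_Collect_eq surj_pair)

lemma loc_eq_smult:
  assumes "is_ideal I" "loc_eq I F (f, k) (g, l)"
  shows "loc_eq I F (const c * f, k) (const c * g, l)"
proof -
  obtain m where "xF F ^ m * (xF F ^ l * f - xF F ^ k * g) \<in> I"
    using assms(2) unfolding loc_eq_def by auto
  from is_ideal_mult[OF assms(1) this, of "const c"] show ?thesis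
    unfolding loc_eq_def by (auto simp: algebra_simps)
qed

lemma loc_eq_add:
  fixes I :: "('v, 'k::field) mpoly set"
  assumes "is_ideal I" "loc_eq I F (f, k) (f', k')" "loc_eq I F (g, l) (g', l')"
  shows "loc_eq I F (xF F ^ l * f + xF F ^ k * g, k + l) (xF F ^ l' * f' + xF F ^ k' * g', k' + l')"
proof -
  define X :: "('v, 'k) mpoly" where "X = xF F"
  obtain m where m: "X ^ m * (X ^ k' * f - X ^ k * f') \<in> I"
    using assms(2) unfolding loc_eq_def X_def by auto
  obtain n where n: "X ^ n * (X ^ l' * g - X ^ l * g') \<in> I"
    using assms(3) unfolding loc_eq_def X_def by auto
  have "X ^ (m + n) * (X ^ (k' + l') * (X ^ l * f + X ^ k * g) - X ^ (k + l) * (X ^ l' * f' + X ^ k' * g')) =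
      X ^ (n + l + l') * (X ^ m * (X ^ k' * f - X ^ k * f')) +
      X ^ (m + k + k') * (X ^ n * (X ^ l' * g - X ^ l * g'))"
    by (simp add: algebra_simps power_add)
  also have "\<dots> \<in> I"
    using assms(1) m n by (blast intro: is_ideal_add is_ideal_mult)
  finally show ?thesis unfolding loc_eq_def X_def by auto
qed

lemma loc_smult_frac:
  assumes "is_ideal I"
  shows "loc_smult I F c (frac I F f k) = frac I F (const c * f) k"
proof -
  have "\<exists>f' k'. frac I F f k = frac I F f' k' \<and> T = frac I F (const c * f') k' \<Longrightarrow>
      T = frac I F (const c * f) k" for T
    using loc_eq_smult[OF assms] by (metis frac_eq_iff[OF assms])
  then show ?thesis
    unfolding loc_smult_def by (rule some_equality[rotated]) auto
qed

lemma loc_add_frac: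
  assumes "is_ideal I"
  shows "loc_add I F (frac I F f k) (frac I F g l) = frac I F (xF F ^ l * f + xF F ^ k * g) (k + l)"
proof -
  have "\<exists>f' k' g' l'. frac I F f k = frac I F f' k' \<and> frac I F g l = frac I F g' l' \<and>
      T = frac I F (xF F ^ l' * f' + xF F ^ k' * g') (k' + l') \<Longrightarrow>
      T = frac I F (xF F ^ l * f + xF F ^ k * g) (k + l)" for T
    using loc_eq_add[OF assms] by (metis frac_eq_iff[OF assms])
  then show ?thesis
    unfolding loc_add_def by (rule some_equality[rotated]) auto
qed

lemma frac_eq_zero_iff:
  assumes "is_ideal I"
  shows "frac I F f k = frac I F 0 0 \<longleftrightarrow> (\<exists>m. xF F ^ m * f \<in> I)"
  by (simp add: frac_eq_iff[OF assms] loc_eq_def)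

text \<open>Not a simp rule: its right-hand side is an instance of its left-hand side, so it is
  always used instantiated.\<close>

lemma frac_zero: "is_ideal I \<Longrightarrow> frac I F 0 k = frac I F 0 0"
  by (simp add: frac_eq_zero_iff is_ideal_zero)

section \<open>Exponent vectors\<close>

definition exponent :: "('v::finite \<Rightarrow> nat) \<Rightarrow> 'v \<Rightarrow>\<^sub>0 nat" where
  "exponent f = Abs_poly_mapping f"

lemma lookup_exponent [simp]: "Poly_Mapping.lookup (exponent f) = f"
  unfolding exponent_def by (rule lookup_Abs_poly_mapping) simp

lemma exponent_zero: "exponent (\<lambda>_. 0) = 0"
  by (rule poly_mapping_eqI) simp

lemma exponent_add: "exponent f + exponent g = exponent (\<lambda>i. f i + g i)"
  by (rule poly_mapping_eqI) (simp add: lookup_add)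

lemma xF_pow: "(xF F ^ m :: ('v::finite, 'k::field) mpoly) = monom (exponent (\<lambda>i. if i \<in> F then m else 0))"
proof -
  have "(\<Prod>i\<in>F. Var i :: ('v, 'k) mpoly) = monom (\<Sum>i\<in>F. Poly_Mapping.single i 1)"
    using finite[of F] by (induction F rule: finite_induct) (simp_all add: monom_zero Var_def monom_mult)
  moreover have "(\<Sum>i\<in>F. Poly_Mapping.single i 1) = exponent (\<lambda>i. if i \<in> F then 1 else 0)"
    by (rule poly_mapping_eqI) (simp add: lookup_sum lookup_single when_def)
  ultimately have xF: "xF F = (monom (exponent (\<lambda>i. if i \<in> F then 1 else 0)) :: ('v, 'k) mpoly)"
    by (simp add: xF_def)
  show ?thesis
  proof (induction m)
    case (Suc m)
    have "(\<lambda>i. (if i \<in> F then 1 else 0) + (if i \<in> F then m else 0)) = (\<lambda>i. if i \<in> F then Suc m else 0)"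
      by auto
    with Suc show ?case by (simp add: xF monom_mult exponent_add)
  qed (simp add: exponent_zero monom_zero)
qed

lemma xF_pow_monom_in_ideal_iff:
  fixes I :: "('v::finite, 'k::field) mpoly set"
  assumes "is_ideal I"
  shows "(\<exists>m. xF F ^ m * monom \<beta> \<in> I) \<longleftrightarrow>
    (\<exists>u\<in>min_gens I. \<forall>j. j \<notin> F \<longrightarrow> Poly_Mapping.lookup u j \<le> Poly_Mapping.lookup \<beta> j)"
    (is "?saturated \<longleftrightarrow> ?divisible")
proof
  assume ?saturated
  then obtain m where "monom (exponent (\<lambda>i. if i \<in> F then m else 0) + \<beta>) \<in> I"
    by (auto simp: xF_pow monom_mult)
  from min_gen_divides[OF this] obtain u where "u \<in> min_gens I"
    and u: "\<And>j. Poly_Mapping.lookup u j \<le> (if j \<in> F then m else 0) + Poly_Mapping.lookup \<beta> j"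
    by (auto simp: lookup_add)
  moreover have "Poly_Mapping.lookup u j \<le> Poly_Mapping.lookup \<beta> j" if "j \<notin> F" for j
    using u[of j] that by simp
  ultimately show ?divisible by blast
next
  assume ?divisible
  then obtain u where u: "u \<in> min_gens I"
    and le: "\<And>j. j \<notin> F \<Longrightarrow> Poly_Mapping.lookup u j \<le> Poly_Mapping.lookup \<beta> j"
    by blast
  define m where "m = (\<Sum>j\<in>UNIV. Poly_Mapping.lookup u j)"
  have "Poly_Mapping.lookup u j \<le> Poly_Mapping.lookup (exponent (\<lambda>i. if i \<in> F then m else 0) + \<beta>) j"
    for j
    using le[of j] member_le_sum[of j UNIV "Poly_Mapping.lookup u"] by (auto simp: m_def lookup_add)
  moreover have "monom u \<in> I" using u by (simp add: min_gens_def)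
  ultimately have "monom (exponent (\<lambda>i. if i \<in> F then m else 0) + \<beta>) \<in> I"
    using monom_in_ideal_if_divides[OF assms] by blast
  then show ?saturated by (auto simp: xF_pow monom_mult)
qed

lemma frac_single_eq_zero_iff:
  fixes I :: "('v::finite, 'k::field) mpoly set"
  assumes "monomial_ideal I"
  shows "frac I F (Poly_Mapping.single \<beta> c) k = frac I F 0 0 \<longleftrightarrow>
    c = 0 \<or> (\<exists>u\<in>min_gens I. \<forall>j. j \<notin> F \<longrightarrow> Poly_Mapping.lookup u j \<le> Poly_Mapping.lookup \<beta> j)"
proof (cases "c = 0")
  case False
  have "xF F ^ m * Poly_Mapping.single \<beta> c \<in> I \<longleftrightarrow> xF F ^ m * monom \<beta> \<in> I" for m
    using single_in_monomial_ideal_iff[OF assms False] by (simp add: xF_pow monom_mult monom_mult_single)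
  then show ?thesis
    using False monomial_ideal_is_ideal[OF assms]
    by (simp add: frac_eq_zero_iff xF_pow_monom_in_ideal_iff)
qed (simp add: frac_zero[OF monomial_ideal_is_ideal[OF assms], of F k])

section \<open>Graded components\<close>

definition loc_deg :: "'v set \<Rightarrow> ('v \<Rightarrow> int) \<Rightarrow> nat \<Rightarrow> 'v \<Rightarrow> int" where
  "loc_deg F a k i = a i + int k * (if i \<in> F then 1 else 0)"

lemma loc_comp_loc_deg: "loc_comp I F a = {frac I F f k | f k. homogeneous f (loc_deg F a k)}"
  unfolding loc_comp_def loc_deg_def[abs_def] by simp

lemma homogeneous_eq_zero: "homogeneous f d \<Longrightarrow> d i < 0 \<Longrightarrow> f = 0"
  unfolding homogeneous_def by (metis keys_eq_empty equals0I of_nat_0_le_iff not_less)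

lemma homogeneous_eq_single:
  fixes f :: "('v::finite, 'k::field) mpoly"
  assumes "homogeneous f d"
  shows "f = Poly_Mapping.single (exponent (nat \<circ> d)) (Poly_Mapping.lookup f (exponent (nat \<circ> d)))"
proof -
  have "\<alpha> = exponent (nat \<circ> d)" if "\<alpha> \<in> Poly_Mapping.keys f" for \<alpha>
    using assms that unfolding homogeneous_def
    by (intro poly_mapping_eqI) (metis comp_apply lookup_exponent nat_int)
  then show ?thesis
    by (intro poly_mapping_eqI) (metis lookup_single_eq lookup_single_not_eq not_in_keys_iff_lookup_eq_zero)
qed

lemma homogeneous_single:
  "(\<And>i. 0 \<le> d i) \<Longrightarrow> homogeneous (Poly_Mapping.single (exponent (nat \<circ> d)) c :: ('v::finite, 'k::field) mpoly) d"
  unfolding homogeneous_def by simp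

lemma xF_pow_mult_single:
  assumes "\<And>i. 0 \<le> loc_deg F a k i"
  shows "(xF F ^ j * Poly_Mapping.single (exponent (nat \<circ> loc_deg F a k)) c :: ('v::finite, 'k::field) mpoly) =
    Poly_Mapping.single (exponent (nat \<circ> loc_deg F a (k + j))) c"
proof -
  have "exponent (\<lambda>i. if i \<in> F then j else 0) + exponent (nat \<circ> loc_deg F a k) =
      exponent (nat \<circ> loc_deg F a (k + j))"
  proof (rule poly_mapping_eqI)
    fix i
    show "Poly_Mapping.lookup (exponent (\<lambda>i. if i \<in> F then j else 0) + exponent (nat \<circ> loc_deg F a k)) i =
        Poly_Mapping.lookup (exponent (nat \<circ> loc_deg F a (k + j))) i"
      using assms[of i] by (auto simp: lookup_add loc_deg_def)
  qed
  then show ?thesis by (simp add: xF_pow monom_mult_single)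
qed

lemma exists_nonneg_loc_deg:
  fixes a :: "'v::finite \<Rightarrow> int"
  assumes "G_neg a \<subseteq> F"
  shows "\<exists>k. \<forall>i. 0 \<le> loc_deg F a k i"
proof -
  define k where "k = (\<Sum>j\<in>UNIV. nat (- a j))"
  have "0 \<le> loc_deg F a k i" for i
  proof -
    have "nat (- a i) \<le> k" unfolding k_def by (rule member_le_sum) simp_all
    then show ?thesis using assms by (auto simp: loc_deg_def G_neg_def subset_iff not_less)
  qed
  then show ?thesis by blast
qed

text \<open>It has degree \<open>a\<close> only if
  \<open>\<gamma> \<ge> 0\<close>: \<open>nat\<close> silently truncates negative entries of \<open>\<gamma>\<close>.\<close>

definition mono_frac ::
    "('v::finite, 'k::field) mpoly set \<Rightarrow> 'v set \<Rightarrow> ('v \<Rightarrow> int) \<Rightarrow> nat \<Rightarrow> 'k \<Rightarrow> (('v, 'k) mpoly \<times> nat) set"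
  where "mono_frac I F a k c = frac I F (Poly_Mapping.single (exponent (nat \<circ> loc_deg F a k)) c) k"

lemma mono_frac_indep:
  fixes I :: "('v::finite, 'k::field) mpoly set"
  assumes "is_ideal I" "\<And>i. 0 \<le> loc_deg F a k i" "\<And>i. 0 \<le> loc_deg F a l i"
  shows "mono_frac I F a k c = mono_frac I F a l c"
proof -
  have "xF F ^ l * Poly_Mapping.single (exponent (nat \<circ> loc_deg F a k)) c =
      (xF F ^ k * Poly_Mapping.single (exponent (nat \<circ> loc_deg F a l)) c :: ('v, 'k) mpoly)"
    unfolding xF_pow_mult_single[OF assms(2)] xF_pow_mult_single[OF assms(3)]
    by (simp only: add.commute)
  then show ?thesis
    unfolding mono_frac_def frac_eq_iff[OF assms(1)] loc_eq_def
    by (intro exI[of _ 0]) (simp add: is_ideal_zero[OF assms(1)])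
qed

lemma mono_frac_zero: "is_ideal I \<Longrightarrow> mono_frac I F a k 0 = frac I F 0 0"
  unfolding mono_frac_def single_zero by (rule frac_zero)

lemma mono_frac_vanishes_iff:
  fixes I :: "('v::finite, 'k::field) mpoly set"
  assumes "monomial_ideal I" "G_neg a \<subseteq> F" "\<And>i. 0 \<le> loc_deg F a k i"
  shows "mono_frac I F a k 1 = mono_frac I F a k 0 \<longleftrightarrow>
    \<not> (\<forall>u\<in>min_gens I. \<exists>j. j \<notin> F \<and> int (nu j u) > a j \<and> a j \<ge> 0)"
proof -
  have "mono_frac I F a k 1 = mono_frac I F a k 0 \<longleftrightarrow>
      (\<exists>u\<in>min_gens I. \<forall>j. j \<notin> F \<longrightarrow> nu j u \<le> nat (a j))"
    unfolding mono_frac_zero[OF monomial_ideal_is_ideal[OF assms(1)]]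
    unfolding mono_frac_def frac_single_eq_zero_iff[OF assms(1)]
    by (simp add: loc_deg_def nu_def)
  moreover have "0 \<le> a j" if "j \<notin> F" for j
    using assms(2) that unfolding G_neg_def by (meson mem_Collect_eq not_le subsetD)
  then have "j \<notin> F \<Longrightarrow> (int (nu j u) > a j \<and> a j \<ge> 0) \<longleftrightarrow> \<not> nu j u \<le> nat (a j)" for j u
    by (auto simp: le_nat_iff)
  ultimately show ?thesis by blast
qed

lemma loc_comp_eq_range_mono_frac:
  fixes I :: "('v::finite, 'k::field) mpoly set"
  assumes "is_ideal I" "\<And>i. 0 \<le> loc_deg F a k i"
  shows "loc_comp I F a = range (mono_frac I F a k)"
proof (intro equalityI subsetI)
  fix P assume "P \<in> loc_comp I F a"
  then obtain f l where P: "P = frac I F f l" and f: "homogeneous f (loc_deg F a l)"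
    unfolding loc_comp_loc_deg by blast
  show "P \<in> range (mono_frac I F a k)"
  proof (cases "\<forall>i. 0 \<le> loc_deg F a l i")
    case True
    then have "P = mono_frac I F a l (Poly_Mapping.lookup f (exponent (nat \<circ> loc_deg F a l)))"
      using homogeneous_eq_single[OF f] by (simp add: P mono_frac_def)
    then show ?thesis using mono_frac_indep[OF assms(1) True[rule_format] assms(2)] by simp
  next
    case False
    then obtain i where "loc_deg F a l i < 0" by (auto simp: not_le)
    then have "f = 0" by (rule homogeneous_eq_zero[OF f])
    then have "P = mono_frac I F a k 0"
      using frac_zero[OF assms(1), of F l] by (simp add: P mono_frac_zero[OF assms(1)])
    then show ?thesis by simp
  qed
next
  fix P assume "P \<in> range (mono_frac I F a k)"
  then show "P \<in> loc_comp I F a"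
    unfolding loc_comp_loc_deg mono_frac_def using homogeneous_single assms(2) by blast
qed

lemma loc_comp_trivial:
  fixes I :: "('v, 'k::field) mpoly set"
  assumes "is_ideal I" "\<not> G_neg a \<subseteq> F"
  shows "loc_comp I F a = {frac I F 0 0}"
proof (intro equalityI subsetI)
  from assms(2) obtain i where "a i < 0" "i \<notin> F"
    by (auto simp: G_neg_def)
  then have "loc_deg F a k i < 0" for k
    by (simp add: loc_deg_def)
  fix P assume "P \<in> loc_comp I F a"
  then obtain f k where "P = frac I F f k" "homogeneous f (loc_deg F a k)"
    unfolding loc_comp_loc_deg by blast
  moreover from this(2) \<open>loc_deg F a k i < 0\<close> have "f = 0"
    by (rule homogeneous_eq_zero)
  ultimately show "P \<in> {frac I F 0 0}"
    using frac_zero[OF assms(1), of F k] by simp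
next
  have "homogeneous (0 :: ('v, 'k) mpoly) (loc_deg F a 0)"
    by (simp add: homogeneous_def)
  then show "P \<in> loc_comp I F a" if "P \<in> {frac I F 0 0}" for P
    using that unfolding loc_comp_loc_deg by blast
qed

section \<open>Parametrizing a component by \<open>K\<close>\<close>

definition loc_linear :: "('v, 'k::field) mpoly set \<Rightarrow> 'v set \<Rightarrow> ('k \<Rightarrow> (('v, 'k) mpoly \<times> nat) set) \<Rightarrow> bool"
  where "loc_linear I F v \<longleftrightarrow>
    (\<forall>c d. v (c + d) = loc_add I F (v c) (v d)) \<and> (\<forall>c d. v (c * d) = loc_smult I F c (v d))"

lemma loc_linear_zero: "is_ideal I \<Longrightarrow> loc_linear I F (\<lambda>_. frac I F 0 0)"
  by (simp add: loc_linear_def loc_add_frac loc_smult_frac)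

lemma loc_linear_mono_frac:
  fixes I :: "('v::finite, 'k::field) mpoly set"
  assumes "is_ideal I" "\<And>i. 0 \<le> loc_deg F a k i"
  shows "loc_linear I F (mono_frac I F a k)"
  unfolding loc_linear_def
proof (intro conjI allI)
  fix c d
  have "loc_add I F (mono_frac I F a k c) (mono_frac I F a k d) = mono_frac I F a (k + k) (c + d)"
    by (simp add: mono_frac_def loc_add_frac[OF assms(1)] xF_pow_mult_single[OF assms(2)] single_add)
  also have "\<dots> = mono_frac I F a k (c + d)"
  proof (rule mono_frac_indep[OF assms(1) _ assms(2)])
    show "0 \<le> loc_deg F a (k + k) i" for i
      using assms(2)[of i] by (auto simp: loc_deg_def)
  qed
  finally show "mono_frac I F a k (c + d) = loc_add I F (mono_frac I F a k c) (mono_frac I F a k d)" ..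
  show "mono_frac I F a k (c * d) = loc_smult I F c (mono_frac I F a k d)"
    by (simp add: mono_frac_def loc_smult_frac[OF assms(1)] const_mult_single)
qed

lemma dim_le_1_range:
  assumes "loc_linear I F v"
  shows "dim_le_1 I F (range v)"
  unfolding dim_le_1_def
proof (intro bexI[of _ "v 1"] ballI)
  fix P assume "P \<in> range v"
  then obtain c where "P = v c" by (rule rangeE)
  then have "P = loc_smult I F c (v 1)"
    using assms unfolding loc_linear_def by (metis mult_1_right)
  then show "\<exists>c. P = loc_smult I F c (v 1)" ..
qed simp

lemma iso_to_K_range_iff:
  assumes "loc_linear I F v"
  shows "iso_to_K I F (range v) \<longleftrightarrow> v 1 \<noteq> v 0"
proof -
  from assms have add: "\<And>c d. v (c + d) = loc_add I F (v c) (v d)"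
    and smult: "\<And>c d. v (c * d) = loc_smult I F c (v d)"
    by (simp_all add: loc_linear_def)
  have v_const: "v c = v 0" if "v e = v 0" "e \<noteq> 0" for c e
  proof -
    have "v c = loc_smult I F (c / e) (v e)" using smult[of "c / e" e] that(2) by simp
    also have "\<dots> = v 0" using smult[of "c / e" 0] that(1) by simp
    finally show ?thesis .
  qed
  show ?thesis
  proof
    assume "iso_to_K I F (range v)"
    then obtain \<phi> where \<phi>: "bij_betw \<phi> (UNIV :: 'b set) (range v)"
      unfolding iso_to_K_def by blast
    show "v 1 \<noteq> v 0"
    proof
      assume "v 1 = v 0"
      moreover obtain c where "\<phi> 0 = v c"
        using bij_betw_apply[OF \<phi> UNIV_I, of 0] by (rule rangeE)
      moreover obtain d where "\<phi> 1 = v d"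
        using bij_betw_apply[OF \<phi> UNIV_I, of 1] by (rule rangeE)
      ultimately have "\<phi> 0 = \<phi> 1" using v_const[of 1 c] v_const[of 1 d] by simp
      then show False using bij_betw_imp_inj_on[OF \<phi>] by (simp add: inj_eq)
    qed
  next
    assume v1: "v 1 \<noteq> v 0"
    have "inj v"
    proof (rule injI)
      fix c d assume "v c = v d"
      have "v (c - d) = loc_add I F (v c) (v (- d))" using add[of c "- d"] by simp
      also have "\<dots> = loc_add I F (v d) (v (- d))" using \<open>v c = v d\<close> by simp
      also have "\<dots> = v 0" using add[of d "- d"] by simp
      finally have "v (c - d) = v 0" .
      then show "c = d" using v_const[of "c - d" 1] v1 by auto
    qed
    then show "iso_to_K I F (range v)"
      unfolding iso_to_K_def using add smult
      by (intro exI[of _ v] conjI allI) (simp_all add: inj_on_imp_bij_betw)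
  qed
qed

theorem lemma1p1:
  fixes I :: "('v::finite, 'k::field) mpoly set" and F :: "'v set" and a :: "'v \<Rightarrow> int"
  assumes "monomial_ideal I"
  shows "dim_le_1 I F (loc_comp I F a) \<and>
    (iso_to_K I F (loc_comp I F a) \<longleftrightarrow>
      (G_neg a \<subseteq> F \<and> (\<forall>u\<in>min_gens I. \<exists>j. j \<notin> F \<and> int (nu j u) > a j \<and> a j \<ge> 0)))"
proof -
  have I: "is_ideal I" using assms by (rule monomial_ideal_is_ideal)
  let ?C = "\<forall>u\<in>min_gens I. \<exists>j. j \<notin> F \<and> int (nu j u) > a j \<and> a j \<ge> 0"
  obtain v where v: "loc_linear I F v" "loc_comp I F a = range v"
    and v_nonzero: "v 1 \<noteq> v 0 \<longleftrightarrow> G_neg a \<subseteq> F \<and> ?C"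
  proof (cases "G_neg a \<subseteq> F")
    case True
    then obtain k where k: "\<And>i. 0 \<le> loc_deg F a k i"
      using exists_nonneg_loc_deg by blast
    show ?thesis
      by (rule that[of "mono_frac I F a k"])
        (auto simp: True loc_linear_mono_frac[OF I k] loc_comp_eq_range_mono_frac[OF I k]
          mono_frac_vanishes_iff[OF assms True k])
  next
    case False
    show ?thesis
      by (rule that[of "\<lambda>_. frac I F 0 0"])
        (simp_all add: False loc_linear_zero[OF I] loc_comp_trivial[OF I False])
  qed
  then show ?thesis
    using dim_le_1_range[OF v(1)] iso_to_K_range_iff[OF v(1)] v_nonzero by simp
qed

end
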